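(* Let $G$ be an infinite countable amenable group and $A\subseteq G$ a stable subset of positive upper Banach density. Then there are infinite sets $B\subseteq A\cdot A^{-1}$ and $C\subseteq A$ such that $B\cdot C\subseteq A$.
   Context: A sequence $(F_n)$ of finite subsets of a countable group $G$ is a (left) Følner sequence if $|F_n|\to\infty$ and $|F_n\cap gF_n|/|F_n|\to1$ for all $g\in G$; $G$ is amenable if it admits one. For a Følner sequence $\mathcal F$, $\bar d_{\mathcal F}(A)=\limsup_n|A\cap F_n|/|F_n|$, and the upper Banach density is $d^*(A)=\sup\{\bar d_{\mathcal F}(A):\mathcal F\text{ a left Følner sequence}\}$. A subset $A\subseteq G$ is stable if the relation $y\cdot x\in A$ is stable, i.e. there is $n$ such that there are no $a_1,\dots,a_n,b_1,\dots,b_n\in G$ with $b_j\cdot a_i\in A\iff i\le j$. *)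

theory Defs
  imports "HOL-Algebra.Coset" "HOL-Library.Countable_Set" "HOL-Library.Liminf_Limsup"
    "HOL-Library.Extended_Real"
begin

definition folner_seq :: "('a, 'b) monoid_scheme \<Rightarrow> (nat \<Rightarrow> 'a set) \<Rightarrow> bool" where
  "folner_seq G F \<longleftrightarrow>
     (\<forall>n. finite (F n) \<and> F n \<subseteq> carrier G) \<and>
     filterlim (\<lambda>n. card (F n)) at_top sequentially \<and>
     (\<forall>g\<in>carrier G.
        (\<lambda>n. real (card (F n \<inter> l_coset G g (F n))) / real (card (F n))) \<longlonglongrightarrow> 1)"

definition amenable :: "('a, 'b) monoid_scheme \<Rightarrow> bool" where
  "amenable G \<longleftrightarrow> (\<exists>F. folner_seq G F)"

definition upper_density_along :: "(nat \<Rightarrow> 'a set) \<Rightarrow> 'a set \<Rightarrow> ereal" where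
  "upper_density_along F A =
     limsup (\<lambda>n. ereal (real (card (A \<inter> F n)) / real (card (F n))))"

definition upper_banach_density :: "('a, 'b) monoid_scheme \<Rightarrow> 'a set \<Rightarrow> ereal" where
  "upper_banach_density G A = (SUP F \<in> {F. folner_seq G F}. upper_density_along F A)"

text \<open>A is stable: the relation  y * x \<in> A  has no half-graphs of some size n.\<close>
definition stable_set :: "('a, 'b) monoid_scheme \<Rightarrow> 'a set \<Rightarrow> bool" where
  "stable_set G A \<longleftrightarrow>
     (\<exists>n::nat. \<not> (\<exists>a b :: nat \<Rightarrow> 'a.
        (\<forall>i<n. a i \<in> carrier G \<and> b i \<in> carrier G) \<and>
        (\<forall>i<n. \<forall>j<n. (b j \<otimes>\<^bsub>G\<^esub> a i \<in> A \<longleftrightarrow> i \<le> j))))"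

end

(*
  Fix a Folner sequence along which A has positive upper density.  Positive density recurs:
  if X has positive density and S is finite, then for some b outside S the set
  X \<inter> b\<inverse>X still has positive density (among N > 4/density left translates of X, two must
  overlap in positive density, and the translating elements can be chosen so that all
  quotients avoid S).  Iterating this yields distinct b\<^sub>0, b\<^sub>1, ... and nested sets
  A \<supseteq> D\<^sub>1 \<supseteq> D\<^sub>2 \<supseteq> ... of positive density with b\<^sub>j D\<^sub>i \<subseteq> A for j < i; picking distinct c\<^sub>i \<in> D\<^sub>i gives
  b\<^sub>j c\<^sub>i \<in> A whenever j < i.  By Ramsey's theorem a subsequence either also has b\<^sub>j c\<^sub>i \<in> A for
  all j > i, or b\<^sub>j c\<^sub>i \<notin> A for all j > i.  The second alternative is an infinite half graph,
  forbidden by stability; in the first, the b's and c's at odd and even positions of the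
  subsequence give the sets B and C.
*)

theory Submission
  imports Defs "HOL-Library.Ramsey"
begin

lemma greedy_injective_sequence:
  assumes "I []" and extend: "\<And>xs. I xs \<Longrightarrow> \<exists>x. x \<notin> set xs \<and> I (xs @ [x])"
  shows "\<exists>f. inj f \<and> (\<forall>n. I (map f [0..<n]))"
proof -
  define ext where "ext xs = (SOME x. x \<notin> set xs \<and> I (xs @ [x]))" for xs
  define hist where "hist n = ((\<lambda>xs. xs @ [ext xs]) ^^ n) []" for n
  define f where "f n = ext (hist n)" for n
  have hist_eq: "hist n = map f [0..<n]" for n
    by (induction n) (simp_all add: hist_def f_def)
  have ext: "ext xs \<notin> set xs \<and> I (xs @ [ext xs])" if "I xs" for xs
    unfolding ext_def by (rule someI_ex) (rule extend[OF that])
  have I_hist: "I (hist n)" for n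
    by (induction n) (simp_all add: assms(1) hist_def ext)
  have "f n \<notin> set (hist n)" for n
    using ext[OF I_hist[of n]] by (simp add: f_def)
  moreover have "f m \<in> set (hist n)" if "m < n" for m n
    using that by (simp add: hist_eq)
  ultimately have "f m \<noteq> f n" if "m < n" for m n
    using that by metis
  then have "inj f" by (rule linorder_injI)
  with I_hist show ?thesis by (auto simp: hist_eq)
qed

lemma injective_choice_from_infinite_sets:
  fixes D :: "nat \<Rightarrow> 'a set"
  assumes "\<And>n. infinite (D n)"
  shows "\<exists>c. inj c \<and> (\<forall>n. c n \<in> D n)"
proof -
  have extend: "\<exists>x. x \<notin> set cs \<and> (\<forall>i<length (cs @ [x]). (cs @ [x]) ! i \<in> D i)"
    if "\<forall>i<length cs. cs ! i \<in> D i" for cs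
  proof -
    have "infinite (D (length cs) - set cs)"
      using assms by (simp add: Diff_infinite_finite)
    then obtain x where "x \<in> D (length cs) - set cs"
      using infinite_imp_nonempty by blast
    with that show ?thesis
      by (intro exI[of _ x]) (auto simp: nth_append less_Suc_eq)
  qed
  obtain c where c: "inj c" "\<forall>n. \<forall>i<length (map c [0..<n]). map c [0..<n] ! i \<in> D i"
    using greedy_injective_sequence[of "\<lambda>cs. \<forall>i<length cs. cs ! i \<in> D i", OF _ extend] by auto
  have "c n \<in> D n" for n
    using c(2) by (metis diff_zero length_map length_upt lessI nth_map_upt add_0)
  with c(1) show ?thesis
    by (intro exI[of _ c]) blast
qed

lemma ramsey_monotone_subsequence:
  fixes R :: "nat \<Rightarrow> nat \<Rightarrow> bool"
  shows "\<exists>h :: nat \<Rightarrow> nat. strict_mono h \<and>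
    ((\<forall>m n. m < n \<longrightarrow> R (h m) (h n)) \<or> (\<forall>m n. m < n \<longrightarrow> \<not> R (h m) (h n)))"
proof -
  define colour where "colour s = (if R (Min s) (Max s) then 0 else 1 :: nat)" for s
  have "\<forall>x\<in>UNIV. \<forall>y\<in>UNIV. x \<noteq> y \<longrightarrow> colour {x, y} < 2"
    by (simp add: colour_def)
  from Ramsey2[OF infinite_UNIV_nat this] obtain Y t where Y: "infinite Y" "t < 2"
    and hom: "\<forall>x\<in>Y. \<forall>y\<in>Y. x \<noteq> y \<longrightarrow> colour {x, y} = t"
    by (elim exE conjE)
  define h where "h = enumerate Y"
  have h: "strict_mono h"
    by (simp add: h_def strict_mono_enumerate Y(1))
  have colour_t: "colour {h m, h n} = t" if "m < n" for m n
  proof -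
    have "h m \<noteq> h n"
      using h that by (simp add: strict_mono_less order_less_imp_not_eq)
    moreover have "h m \<in> Y" "h n \<in> Y"
      using enumerate_in_set[OF Y(1)] by (simp_all add: h_def)
    ultimately show ?thesis
      using hom by blast
  qed
  have colour_R: "colour {h m, h n} = (if R (h m) (h n) then 0 else 1)" if "m < n" for m n
  proof -
    have "h m < h n"
      using h that by (simp add: strict_mono_less)
    then have "Min {h m, h n} = h m" "Max {h m, h n} = h n"
      by (simp_all add: min_def max_def)
    then show ?thesis
      by (simp add: colour_def)
  qed
  have R_iff: "R (h m) (h n) \<longleftrightarrow> t = 0" if "m < n" for m n
    using colour_t[OF that] colour_R[OF that] by (cases "R (h m) (h n)") simp_all
  have monochromatic: "(\<forall>m n. m < n \<longrightarrow> R (h m) (h n)) \<or> (\<forall>m n. m < n \<longrightarrow> \<not> R (h m) (h n))"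
    using R_iff by (cases "t = 0") auto
  show ?thesis
    by (intro exI[of _ h] conjI h monochromatic)
qed

lemma sum_card_le_card_UN_plus_pairwise_Int:
  fixes N :: nat
  assumes "\<forall>k<N. finite (Y k)"
  shows "(\<Sum>k<N. card (Y k)) \<le> card (\<Union>k<N. Y k) + (\<Sum>l<N. \<Sum>k<l. card (Y k \<inter> Y l))"
  using assms
proof (induction N)
  case (Suc N)
  let ?U = "\<Union>k<N. Y k"
  have "card ?U + card (Y N) = card (?U \<union> Y N) + card (?U \<inter> Y N)"
    using Suc.prems by (intro card_Un_Int) auto
  moreover have "card (?U \<inter> Y N) \<le> (\<Sum>k<N. card (Y k \<inter> Y N))"
    unfolding UN_extend_simps(4) by (rule card_UN_le) simp
  moreover have "(\<Union>k<Suc N. Y k) = ?U \<union> Y N"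
    by (auto simp: lessThan_Suc)
  ultimately show ?case
    using Suc by (simp add: Int_commute)
qed simp

lemma exists_pair_with_large_intersection:
  fixes e :: real
  assumes T: "finite T" "T \<noteq> {}" and Ne: "2 \<le> N * e"
    and dense: "\<And>k. k < N \<Longrightarrow> e * card T \<le> card (Y k \<inter> T)"
  shows "\<exists>k l. k < l \<and> l < N \<and> card T < N\<^sup>2 * card (Y k \<inter> Y l \<inter> T)"
proof (rule ccontr)
  assume no_pair: "\<not> ?thesis"
  have N: "N > 0"
    using Ne by (cases N) auto
  have sparse: "real (card (Y k \<inter> Y l \<inter> T)) \<le> card T / N\<^sup>2" if "k < l" "l < N" for k l
  proof -
    have "N\<^sup>2 * card (Y k \<inter> Y l \<inter> T) \<le> card T"
      using that no_pair by (meson not_less)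
    then have "real N ^ 2 * card (Y k \<inter> Y l \<inter> T) \<le> card T"
      by (metis of_nat_le_iff of_nat_mult of_nat_power)
    then show ?thesis
      using N by (simp add: pos_le_divide_eq mult.commute)
  qed
  have "2 * card T \<le> (\<Sum>k<N. e * card T)"
    using mult_right_mono[OF Ne, of "card T"] by (simp add: mult.assoc)
  also have "\<dots> \<le> (\<Sum>k<N. real (card (Y k \<inter> T)))"
    using dense by (intro sum_mono) simp
  also have "\<dots> \<le> real (card (\<Union>k<N. Y k \<inter> T)) + (\<Sum>l<N. \<Sum>k<l. real (card (Y k \<inter> Y l \<inter> T)))"
    using sum_card_le_card_UN_plus_pairwise_Int[of N "\<lambda>k. Y k \<inter> T"] T(1)
    by (simp add: Int_ac flip: of_nat_sum of_nat_add)
  also have "\<dots> \<le> card T + (\<Sum>l<N. \<Sum>k<l. card T / N\<^sup>2)"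
    using sparse T(1) by (intro add_mono sum_mono) (auto simp: card_mono)
  also have "\<dots> = card T + (\<Sum>l<N. real l) * (card T / N\<^sup>2)"
    by (simp add: sum_distrib_right sum_divide_distrib)
  also have "\<dots> < card T + real N * N * (card T / N\<^sup>2)"
  proof -
    have "(\<Sum>l<N. real l) < (\<Sum>l<N. real N)"
      using N by (intro sum_strict_mono) auto
    then have "(\<Sum>l<N. real l) < real N * N"
      by simp
    then show ?thesis
      using T N by (intro add_strict_left_mono mult_strict_right_mono) (auto simp: card_gt_0_iff)
  qed
  finally show False
    using N by (simp add: power2_eq_square)
qed

section \<open>Left translates\<close>

lemma (in group) card_l_coset:
  assumes "g \<in> carrier G" and "X \<subseteq> carrier G"
  shows "card (g <# X) = card X"
proof -
  have "g <# X = (\<lambda>x. g \<otimes> x) ` X"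
    by (auto simp: l_coset_def)
  with assms show ?thesis
    by (simp add: card_image inj_on_def subset_iff)
qed

lemma (in group) card_Int_le_card_l_coset_Int:
  assumes g: "g \<in> carrier G" and X: "X \<subseteq> carrier G" and T: "finite T"
  shows "card (X \<inter> T) \<le> card ((g <# X) \<inter> T) + card ((g <# T) - T)"
proof -
  have "card (X \<inter> T) = card (g <# (X \<inter> T))"
    using g X by (simp add: card_l_coset le_infI1)
  also have "\<dots> \<le> card (((g <# X) \<inter> T) \<union> ((g <# T) - T))"
    using T by (intro card_mono) (auto simp: l_coset_def)
  also have "\<dots> \<le> card ((g <# X) \<inter> T) + card ((g <# T) - T)"
    by (rule card_Un_le)
  finally show ?thesis .
qed

lemma (in group) l_coset_inv_Int_l_coset_subset:
  assumes g: "g \<in> carrier G" and h: "h \<in> carrier G" and X: "X \<subseteq> carrier G"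
  shows "inv g <# ((g <# X) \<inter> (h <# X)) \<subseteq> X \<inter> {x \<in> carrier G. (inv h \<otimes> g) \<otimes> x \<in> X}"
proof
  fix z assume "z \<in> inv g <# ((g <# X) \<inter> (h <# X))"
  then obtain x y where xy: "x \<in> X" "y \<in> X" "g \<otimes> x = h \<otimes> y" and z: "z = inv g \<otimes> (g \<otimes> x)"
    by (auto simp: l_coset_def)
  have "z = x"
    using z xy(1) g X by (auto simp: m_assoc[symmetric])
  have "(inv h \<otimes> g) \<otimes> x = inv h \<otimes> (h \<otimes> y)"
    using xy g h X by (auto simp: m_assoc)
  also have "\<dots> = y"
    using xy(2) h X by (auto simp: m_assoc[symmetric])
  finally have "(inv h \<otimes> g) \<otimes> x = y" .
  with \<open>z = x\<close> show "z \<in> X \<inter> {x \<in> carrier G. (inv h \<otimes> g) \<otimes> x \<in> X}"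
    using xy X by auto
qed

lemma (in group) inv_mult_avoiding_sequence:
  fixes N :: nat
  assumes inf: "infinite (carrier G)" and S: "finite S"
  shows "\<exists>g. (\<forall>k<N. g k \<in> carrier G) \<and> (\<forall>k l. k < l \<longrightarrow> l < N \<longrightarrow> inv (g l) \<otimes> g k \<notin> S)"
proof (induction N)
  case (Suc N)
  then obtain g where g: "\<forall>k<N. g k \<in> carrier G"
    and avoid: "\<forall>k l. k < l \<longrightarrow> l < N \<longrightarrow> inv (g l) \<otimes> g k \<notin> S"
    by blast
  let ?T = "(\<lambda>(k, s). g k \<otimes> inv s) ` ({..<N} \<times> (S \<inter> carrier G))"
  have "infinite (carrier G - ?T)"
    using inf S by (simp add: Diff_infinite_finite)
  then obtain x where x: "x \<in> carrier G" "x \<notin> ?T"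
    using infinite_imp_nonempty by blast
  have "inv x \<otimes> g k \<notin> S" if "k < N" for k
  proof
    assume "inv x \<otimes> g k \<in> S"
    moreover have "g k \<otimes> inv (inv x \<otimes> g k) = x"
      using x g that by (simp add: inv_mult_group m_assoc[symmetric])
    ultimately have "x \<in> ?T"
      using x g that by (force intro!: image_eqI[of _ _ "(k, inv x \<otimes> g k)"])
    with x show False by simp
  qed
  then have "\<forall>k l. k < l \<longrightarrow> l < Suc N \<longrightarrow> inv ((g(N := x)) l) \<otimes> (g(N := x)) k \<notin> S"
    using avoid by (auto simp: less_Suc_eq)
  with g x show ?case
    by (intro exI[of _ "g(N := x)"]) auto
qed simp

section \<open>Positive upper density along a sequence of finite sets\<close>

lemma limsup_ereal_pos_iff:
  fixes u :: "nat \<Rightarrow> real"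
  shows "0 < limsup (\<lambda>n. ereal (u n)) \<longleftrightarrow> (\<exists>e>0. \<exists>\<^sub>F n in sequentially. e < u n)"
proof
  assume "0 < limsup (\<lambda>n. ereal (u n))"
  then obtain e where e: "0 < ereal e" "ereal e < limsup (\<lambda>n. ereal (u n))"
    using ereal_dense2 by blast
  have "\<exists>\<^sub>F n in sequentially. e < u n"
  proof (rule ccontr)
    assume "\<not> ?thesis"
    then have "\<forall>\<^sub>F n in sequentially. ereal (u n) \<le> ereal e"
      by (simp add: not_frequently not_less)
    with e(2) show False
      using Limsup_bounded by (metis not_le)
  qed
  with e(1) show "\<exists>e>0. \<exists>\<^sub>F n in sequentially. e < u n"
    by auto
next
  assume "\<exists>e>0. \<exists>\<^sub>F n in sequentially. e < u n"
  then obtain e where e: "e > 0" "\<exists>\<^sub>F n in sequentially. e < u n"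
    by blast
  have "\<not> limsup (\<lambda>n. ereal (u n)) < ereal e"
  proof
    assume "limsup (\<lambda>n. ereal (u n)) < ereal e"
    then have "\<forall>\<^sub>F n in sequentially. \<not> e < u n"
      by (rule eventually_mono[OF Limsup_lessD]) auto
    with e(2) show False
      by (simp add: frequently_def)
  qed
  with e(1) show "0 < limsup (\<lambda>n. ereal (u n))"
    by (simp add: not_less) (meson ereal_less(2) less_le_trans)
qed

lemma upper_density_along_pos_iff:
  assumes "\<And>n. finite (F n)"
  shows "0 < upper_density_along F X \<longleftrightarrow>
    (\<exists>e>(0::real). \<exists>\<^sub>F n in sequentially. e * card (F n) < card (X \<inter> F n))"
proof -
  define u where "u n = real (card (X \<inter> F n)) / real (card (F n))" for n
  have u_iff: "e < u n \<longleftrightarrow> e * card (F n) < card (X \<inter> F n)" if "e > 0" for e n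
  proof (cases "F n = {}")
    case False
    then show ?thesis
      using assms by (simp add: u_def pos_less_divide_eq card_gt_0_iff)
  qed (use that in \<open>simp add: u_def\<close>)
  have "0 < upper_density_along F X \<longleftrightarrow> (\<exists>e>0. \<exists>\<^sub>F n in sequentially. e < u n)"
    unfolding upper_density_along_def u_def by (rule limsup_ereal_pos_iff)
  also have "\<dots> \<longleftrightarrow> (\<exists>e>(0::real). \<exists>\<^sub>F n in sequentially. e * card (F n) < card (X \<inter> F n))"
    by (intro ex_cong1 conj_cong refl) (simp add: u_iff)
  finally show ?thesis .
qed

lemma upper_density_along_mono:
  assumes "\<And>n. finite (F n)" and "X \<subseteq> Y"
  shows "upper_density_along F X \<le> upper_density_along F Y"
  unfolding upper_density_along_def
proof (intro Limsup_mono always_eventually allI)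
  fix n
  have "card (X \<inter> F n) \<le> card (Y \<inter> F n)"
    using assms by (intro card_mono) auto
  then show "ereal (real (card (X \<inter> F n)) / real (card (F n))) \<le> ereal (real (card (Y \<inter> F n)) / real (card (F n)))"
    by (simp add: divide_right_mono)
qed

section \<open>Recurrence along a Folner sequence\<close>

locale folner_sequence = group G for G (structure) +
  fixes F :: "nat \<Rightarrow> 'a set"
  assumes folner: "folner_seq G F"
begin

lemma finite_F: "finite (F n)" and F_carrier: "F n \<subseteq> carrier G"
  using folner by (auto simp: folner_seq_def)

lemma eventually_card_F_ge: "\<forall>\<^sub>F n in sequentially. k \<le> card (F n)"
  using folner by (auto simp: folner_seq_def filterlim_at_top)

lemma infinite_carrier: "infinite (carrier G)"
proof
  assume "finite (carrier G)"
  then have le: "card (F n) \<le> card (carrier G)" for n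
    using F_carrier by (simp add: card_mono)
  obtain n where "Suc (card (carrier G)) \<le> card (F n)"
    using eventually_card_F_ge eventually_happens' sequentially_bot by blast
  with le[of n] show False
    by linarith
qed

lemma eventually_card_l_coset_diff_le:
  fixes \<epsilon> :: real
  assumes g: "g \<in> carrier G" and \<epsilon>: "\<epsilon> > 0"
  shows "\<forall>\<^sub>F n in sequentially. card ((g <# F n) - F n) \<le> \<epsilon> * card (F n)"
proof -
  have "(\<lambda>n. card (F n \<inter> (g <# F n)) / card (F n)) \<longlonglongrightarrow> 1"
    using folner g by (simp add: folner_seq_def)
  then have "\<forall>\<^sub>F n in sequentially. 1 - \<epsilon> < card (F n \<inter> (g <# F n)) / card (F n)"
    using \<epsilon> by (intro order_tendstoD) auto
  with eventually_card_F_ge[of 1] show ?thesis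
  proof (rule eventually_elim2)
    fix n
    assume "1 \<le> card (F n)" and "1 - \<epsilon> < card (F n \<inter> (g <# F n)) / card (F n)"
    then have overlap: "(1 - \<epsilon>) * card (F n) < card (F n \<inter> (g <# F n))"
      by (simp add: pos_less_divide_eq)
    have "card (g <# F n) = card (F n)"
      using g F_carrier by (rule card_l_coset)
    moreover have "card ((g <# F n) - F n) = card (g <# F n) - card ((g <# F n) \<inter> F n)"
      using finite_F by (intro card_Diff_subset_Int) simp
    moreover have "card (F n \<inter> (g <# F n)) \<le> card (F n)"
      using finite_F by (intro card_mono) auto
    ultimately show "card ((g <# F n) - F n) \<le> \<epsilon> * card (F n)"
      using overlap by (simp add: Int_commute of_nat_diff left_diff_distrib)
  qed
qed

lemma card_l_coset_Int_F_ge: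
  fixes \<delta> :: real
  assumes g: "g \<in> carrier G" and X: "X \<subseteq> carrier G"
    and \<delta>: "card ((g <# F n) - F n) \<le> \<delta> * card (F n)"
  shows "card (X \<inter> F n) - \<delta> * card (F n) \<le> card ((g <# X) \<inter> F n)"
proof -
  have "real (card (X \<inter> F n)) \<le> real (card ((g <# X) \<inter> F n) + card ((g <# F n) - F n))"
    using card_Int_le_card_l_coset_Int[OF g X finite_F] by (simp only: of_nat_le_iff)
  with \<delta> show ?thesis
    by simp
qed

lemma upper_density_pos_imp_infinite:
  assumes "0 < upper_density_along F X"
  shows "infinite X"
proof
  assume X: "finite X"
  obtain e :: real where e: "e > 0" "\<exists>\<^sub>F n in sequentially. e * card (F n) < card (X \<inter> F n)"
    using assms finite_F by (auto simp: upper_density_along_pos_iff)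
  obtain k :: nat where k: "card X / e < k"
    using reals_Archimedean2 by blast
  have "\<forall>\<^sub>F n in sequentially. \<not> e * card (F n) < card (X \<inter> F n)"
    using eventually_card_F_ge[of k]
  proof eventually_elim
    case (elim n)
    have "card X < e * k"
      using k e(1) by (simp add: pos_divide_less_eq mult.commute)
    also have "\<dots> \<le> e * card (F n)"
      using elim e(1) by (intro mult_left_mono) auto
    finally have "card X < e * card (F n)" .
    moreover have "card (X \<inter> F n) \<le> card X"
      using X by (simp add: card_mono)
    ultimately show ?case
      by linarith
  qed
  with e(2) show False
    by (simp add: frequently_def)
qed

lemma upper_density_l_coset_pos:
  assumes g: "g \<in> carrier G" and X: "X \<subseteq> carrier G" and pos: "0 < upper_density_along F X"
  shows "0 < upper_density_along F (g <# X)"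
proof -
  obtain e :: real where e: "e > 0" "\<exists>\<^sub>F n in sequentially. e * card (F n) < card (X \<inter> F n)"
    using pos finite_F by (auto simp: upper_density_along_pos_iff)
  have "\<exists>\<^sub>F n in sequentially. e / 2 * card (F n) < card ((g <# X) \<inter> F n)"
    using frequently_eventually_frequently[OF e(2) eventually_card_l_coset_diff_le[OF g half_gt_zero[OF e(1)]]]
  proof (rule frequently_elim1)
    fix n assume "e * card (F n) < card (X \<inter> F n) \<and> card ((g <# F n) - F n) \<le> e / 2 * card (F n)"
    with card_l_coset_Int_F_ge[OF g X, of n "e / 2"]
    show "e / 2 * card (F n) < card ((g <# X) \<inter> F n)"
      by linarith
  qed
  then show ?thesis
    using half_gt_zero[OF e(1)] unfolding upper_density_along_pos_iff[OF finite_F] by blast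
qed

lemma upper_density_pos_pair_of_l_cosets:
  fixes e :: real and N :: nat
  assumes X: "X \<subseteq> carrier G" and e: "e > 0"
    and dense: "\<exists>\<^sub>F n in sequentially. e * card (F n) < card (X \<inter> F n)"
    and N: "4 \<le> N * e" and g: "\<forall>k<N. g k \<in> carrier G"
  shows "\<exists>k l. k < l \<and> l < N \<and> 0 < upper_density_along F ((g k <# X) \<inter> (g l <# X))"
proof -
  have "\<forall>\<^sub>F n in sequentially. 1 \<le> card (F n) \<and>
      (\<forall>k\<in>{..<N}. card ((g k <# F n) - F n) \<le> e / 2 * card (F n))"
    using g e by (intro eventually_conj eventually_card_F_ge eventually_ball_finite ballI
        eventually_card_l_coset_diff_le) auto
  from frequently_eventually_frequently[OF dense this]
  have "\<exists>\<^sub>F n in sequentially. \<exists>l\<in>{..<N}. \<exists>k\<in>{..<l}.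
      card (F n) < N\<^sup>2 * card ((g k <# X) \<inter> (g l <# X) \<inter> F n)"
  proof (rule frequently_elim1)
    fix n assume n: "e * card (F n) < card (X \<inter> F n) \<and> 1 \<le> card (F n) \<and>
      (\<forall>k\<in>{..<N}. card ((g k <# F n) - F n) \<le> e / 2 * card (F n))"
    have "e / 2 * card (F n) \<le> card ((g k <# X) \<inter> F n)" if "k < N" for k
      using n that card_l_coset_Int_F_ge[OF _ X, of "g k" n "e / 2"] g by auto
    moreover have "F n \<noteq> {}"
      using n by auto
    moreover have "2 \<le> N * (e / 2)"
      using N by simp
    ultimately obtain k l where "k < l" "l < N"
      "card (F n) < N\<^sup>2 * card ((g k <# X) \<inter> (g l <# X) \<inter> F n)"
      using exists_pair_with_large_intersection[OF finite_F, of n N "e / 2" "\<lambda>k. g k <# X"] by blast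
    then show "\<exists>l\<in>{..<N}. \<exists>k\<in>{..<l}. card (F n) < N\<^sup>2 * card ((g k <# X) \<inter> (g l <# X) \<inter> F n)"
      by blast
  qed
  then have "\<exists>l\<in>{..<N}. \<exists>\<^sub>F n in sequentially. \<exists>k\<in>{..<l}.
      card (F n) < N\<^sup>2 * card ((g k <# X) \<inter> (g l <# X) \<inter> F n)"
    by (rule frequently_bex_finite[OF finite_lessThan])
  then obtain l where l: "l \<in> {..<N}" and freq_l: "\<exists>\<^sub>F n in sequentially. \<exists>k\<in>{..<l}.
      card (F n) < N\<^sup>2 * card ((g k <# X) \<inter> (g l <# X) \<inter> F n)"
    by blast
  from freq_l have "\<exists>k\<in>{..<l}. \<exists>\<^sub>F n in sequentially.
      card (F n) < N\<^sup>2 * card ((g k <# X) \<inter> (g l <# X) \<inter> F n)"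
    by (rule frequently_bex_finite[OF finite_lessThan])
  then obtain k where k: "k \<in> {..<l}"
    and freq: "\<exists>\<^sub>F n in sequentially. card (F n) < N\<^sup>2 * card ((g k <# X) \<inter> (g l <# X) \<inter> F n)"
    by blast
  have "\<exists>\<^sub>F n in sequentially. 1 / N\<^sup>2 * card (F n) < card (((g k <# X) \<inter> (g l <# X)) \<inter> F n)"
    using freq l by (elim frequently_elim1) (simp add: field_simps flip: of_nat_power of_nat_mult)
  then have "0 < upper_density_along F ((g k <# X) \<inter> (g l <# X))"
    using l unfolding upper_density_along_pos_iff[OF finite_F] by (intro exI[of _ "1 / N\<^sup>2"]) auto
  with k l show ?thesis
    by blast
qed

lemma upper_density_pos_recurrence:
  assumes X: "X \<subseteq> carrier G" and pos: "0 < upper_density_along F X" and S: "finite S"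
  shows "\<exists>b \<in> carrier G - S. 0 < upper_density_along F (X \<inter> {x \<in> carrier G. b \<otimes> x \<in> X})"
proof -
  obtain e :: real where e: "e > 0" "\<exists>\<^sub>F n in sequentially. e * card (F n) < card (X \<inter> F n)"
    using pos finite_F by (auto simp: upper_density_along_pos_iff)
  obtain N :: nat where "4 / e < N"
    using reals_Archimedean2 by blast
  then have N: "4 \<le> N * e"
    using e(1) by (simp add: pos_divide_less_eq mult.commute)
  obtain g where g: "\<forall>k<N. g k \<in> carrier G"
    and avoid: "\<forall>k l. k < l \<longrightarrow> l < N \<longrightarrow> inv (g l) \<otimes> g k \<notin> S"
    using inv_mult_avoiding_sequence[OF infinite_carrier S] by blast
  obtain k l where kl: "k < l" "l < N" and "0 < upper_density_along F ((g k <# X) \<inter> (g l <# X))"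
    using upper_density_pos_pair_of_l_cosets[OF X e N g] by blast
  then have "0 < upper_density_along F (inv (g k) <# ((g k <# X) \<inter> (g l <# X)))"
    using g X by (intro upper_density_l_coset_pos) (auto simp: l_coset_def)
  also have "\<dots> \<le> upper_density_along F (X \<inter> {x \<in> carrier G. (inv (g l) \<otimes> g k) \<otimes> x \<in> X})"
    using g kl X by (intro upper_density_along_mono[OF finite_F] l_coset_inv_Int_l_coset_subset) auto
  finally have "0 < upper_density_along F (X \<inter> {x \<in> carrier G. (inv (g l) \<otimes> g k) \<otimes> x \<in> X})" .
  moreover have "inv (g l) \<otimes> g k \<in> carrier G - S"
    using g avoid kl by auto
  ultimately show ?thesis
    by (intro bexI[of _ "inv (g l) \<otimes> g k"])
qed

lemma half_graph_sequences:
  assumes A: "A \<subseteq> carrier G" and pos: "0 < upper_density_along F A"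
  shows "\<exists>b c :: nat \<Rightarrow> 'a. inj b \<and> inj c \<and> range b \<subseteq> carrier G \<and> range c \<subseteq> A \<and>
    (\<forall>j i. j < i \<longrightarrow> b j \<otimes> c i \<in> A)"
proof -
  define D where "D bs = {x \<in> A. \<forall>b\<in>set bs. b \<otimes> x \<in> A}" for bs
  have extend: "\<exists>b. b \<notin> set bs \<and> set (bs @ [b]) \<subseteq> carrier G \<and> 0 < upper_density_along F (D (bs @ [b]))"
    if "set bs \<subseteq> carrier G \<and> 0 < upper_density_along F (D bs)" for bs
  proof -
    have "D bs \<subseteq> carrier G"
      using A by (auto simp: D_def)
    from upper_density_pos_recurrence[OF this _ finite_set] that
    obtain b where b: "b \<in> carrier G - set bs"
      and pos_b: "0 < upper_density_along F (D bs \<inter> {x \<in> carrier G. b \<otimes> x \<in> D bs})"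
      by blast
    have "upper_density_along F (D bs \<inter> {x \<in> carrier G. b \<otimes> x \<in> D bs}) \<le>
        upper_density_along F (D (bs @ [b]))"
      by (rule upper_density_along_mono[of F, OF finite_F]) (auto simp: D_def)
    with pos_b have "0 < upper_density_along F (D (bs @ [b]))"
      by (rule order.strict_trans2)
    with b that show ?thesis
      by (intro exI[of _ b]) auto
  qed
  have "set [] \<subseteq> carrier G \<and> 0 < upper_density_along F (D [])"
    using pos by (simp add: D_def)
  from greedy_injective_sequence[of "\<lambda>bs. set bs \<subseteq> carrier G \<and> 0 < upper_density_along F (D bs)",
      OF this extend]
  obtain b where b: "inj b"
    "\<forall>n. set (map b [0..<n]) \<subseteq> carrier G \<and> 0 < upper_density_along F (D (map b [0..<n]))"
    by blast
  then have "\<And>n. infinite (D (map b [0..<n]))"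
    using upper_density_pos_imp_infinite by blast
  from injective_choice_from_infinite_sets[of "\<lambda>n. D (map b [0..<n])", OF this]
  obtain c where c: "inj c" "\<forall>n. c n \<in> D (map b [0..<n])"
    by blast
  have "b n \<in> carrier G" for n
    using b(2)[rule_format, of "Suc n"] by simp
  then have "range b \<subseteq> carrier G"
    by blast
  moreover have "range c \<subseteq> A"
    using c(2) by (auto simp: D_def)
  moreover have "\<forall>j i. j < i \<longrightarrow> b j \<otimes> c i \<in> A"
    using c(2) by (auto simp: D_def)
  ultimately show ?thesis
    using b(1) c(1) by (intro exI[of _ b] exI[of _ c]) (simp only:)
qed

end

section \<open>Stability and Ramsey's theorem\<close>

lemma stable_set_no_infinite_half_graph:
  fixes G :: "('a, 'b) monoid_scheme" and a b :: "nat \<Rightarrow> 'a"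
  assumes "stable_set G A" and "\<And>i. a i \<in> carrier G" and "\<And>i. b i \<in> carrier G"
  shows "\<not> (\<forall>i j. b j \<otimes>\<^bsub>G\<^esub> a i \<in> A \<longleftrightarrow> j < i)"
proof
  assume half_graph: "\<forall>i j. b j \<otimes>\<^bsub>G\<^esub> a i \<in> A \<longleftrightarrow> j < i"
  obtain n where no_half_graph: "\<not> (\<exists>a b :: nat \<Rightarrow> _. (\<forall>i<n. a i \<in> carrier G \<and> b i \<in> carrier G) \<and>
      (\<forall>i<n. \<forall>j<n. b j \<otimes>\<^bsub>G\<^esub> a i \<in> A \<longleftrightarrow> i \<le> j))"
    using assms(1) unfolding stable_set_def by blast
  \<comment> \<open>Reversing the order of both sequences turns \<open>j < i\<close> into \<open>i \<le> j\<close>.\<close>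
  have "\<exists>a' b' :: nat \<Rightarrow> 'a. (\<forall>i<n. a' i \<in> carrier G \<and> b' i \<in> carrier G) \<and>
      (\<forall>i<n. \<forall>j<n. b' j \<otimes>\<^bsub>G\<^esub> a' i \<in> A \<longleftrightarrow> i \<le> j)"
  proof (intro exI conjI allI impI)
    fix i j assume "i < n" "j < n"
    then have "n - Suc j < n - i \<longleftrightarrow> i \<le> j"
      by arith
    then show "b (n - Suc j) \<otimes>\<^bsub>G\<^esub> a (n - i) \<in> A \<longleftrightarrow> i \<le> j"
      by (simp add: half_graph)
  qed (simp_all add: assms(2,3))
  with no_half_graph show False
    by contradiction
qed

lemma (in group) stable_half_graph_extends:
  fixes b c :: "nat \<Rightarrow> 'a"
  assumes A: "A \<subseteq> carrier G" and stable: "stable_set G A"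
    and b: "range b \<subseteq> carrier G" and c: "range c \<subseteq> A"
    and half: "\<forall>j i. j < i \<longrightarrow> b j \<otimes> c i \<in> A"
  shows "\<exists>h :: nat \<Rightarrow> nat. strict_mono h \<and> (\<forall>m n. m \<noteq> n \<longrightarrow> b (h m) \<otimes> c (h n) \<in> A)"
proof -
  obtain h :: "nat \<Rightarrow> nat" where h: "strict_mono h"
    and hom: "(\<forall>m n. m < n \<longrightarrow> b (h n) \<otimes> c (h m) \<in> A) \<or> (\<forall>m n. m < n \<longrightarrow> b (h n) \<otimes> c (h m) \<notin> A)"
    using ramsey_monotone_subsequence[of "\<lambda>m n. b n \<otimes> c m \<in> A"] by blast
  have "\<not> (\<forall>m n. m < n \<longrightarrow> b (h n) \<otimes> c (h m) \<notin> A)"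
  proof
    assume anti: "\<forall>m n. m < n \<longrightarrow> b (h n) \<otimes> c (h m) \<notin> A"
    have half_graph: "b (h (2 * j + 1)) \<otimes> c (h (2 * i)) \<in> A \<longleftrightarrow> j < i" for i j
    proof (cases "j < i")
      case True
      then have "h (2 * j + 1) < h (2 * i)"
        using h by (simp add: strict_mono_less)
      with half True show ?thesis by blast
    next
      case False
      then have "h (2 * i) < h (2 * j + 1)"
        using h by (simp add: strict_mono_less)
      with anti h False show ?thesis
        by (simp add: strict_mono_less)
    qed
    have "\<not> (\<forall>i j. b (h (2 * j + 1)) \<otimes> c (h (2 * i)) \<in> A \<longleftrightarrow> j < i)"
      by (rule stable_set_no_infinite_half_graph[OF stable]) (use b c A in auto)
    with half_graph show False
      by blast
  qed
  with hom have later_first: "b (h n) \<otimes> c (h m) \<in> A" if "m < n" for m n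
    using that by blast
  have "b (h m) \<otimes> c (h n) \<in> A" if "m \<noteq> n" for m n
  proof (cases "m < n")
    case True
    with half h show ?thesis by (simp add: strict_mono_less)
  next
    case False
    with later_first that show ?thesis by simp
  qed
  with h show ?thesis
    by (intro exI[of _ h]) blast
qed

lemma (in group) infinite_sets_from_off_diagonal:
  fixes b c :: "nat \<Rightarrow> 'a"
  assumes A: "A \<subseteq> carrier G" and b: "inj b" "range b \<subseteq> carrier G" and c: "inj c" "range c \<subseteq> A"
    and off_diagonal: "\<forall>m n. m \<noteq> n \<longrightarrow> b m \<otimes> c n \<in> A"
  shows "\<exists>B C. infinite B \<and> infinite C \<and>
    B \<subseteq> {a \<otimes> inv a' | a a'. a \<in> A \<and> a' \<in> A} \<and> C \<subseteq> A \<and> (\<forall>x\<in>B. \<forall>y\<in>C. x \<otimes> y \<in> A)"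
proof -
  \<comment> \<open>Odd and even positions keep the indices of the two factors distinct.\<close>
  define B where "B = range (\<lambda>k. b (2 * k + 1))"
  define C where "C = range (\<lambda>k. c (2 * k))"
  have "inj (\<lambda>k. b (2 * k + 1))" "inj (\<lambda>k. c (2 * k))"
    by (auto intro!: injI dest!: injD[OF b(1)] injD[OF c(1)])
  then have "infinite B" "infinite C"
    by (simp_all add: B_def C_def range_inj_infinite)
  moreover have BC: "\<forall>x\<in>B. \<forall>y\<in>C. x \<otimes> y \<in> A"
  proof (intro ballI)
    fix x y assume "x \<in> B" "y \<in> C"
    then obtain k m where "x = b (2 * k + 1)" "y = c (2 * m)"
      by (auto simp: B_def C_def)
    moreover have "2 * k + 1 \<noteq> 2 * m"
      by presburger
    ultimately show "x \<otimes> y \<in> A"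
      using off_diagonal by blast
  qed
  moreover have "C \<subseteq> A"
    using c(2) by (auto simp: C_def)
  moreover have "B \<subseteq> {a \<otimes> inv a' | a a'. a \<in> A \<and> a' \<in> A}"
  proof
    fix x assume x: "x \<in> B"
    have "c 0 \<in> C"
      unfolding C_def by (rule range_eqI[of _ _ 0]) simp
    moreover have "x \<in> carrier G"
      using x b(2) by (auto simp: B_def)
    moreover have "c 0 \<in> carrier G"
      using c(2) A by auto
    with \<open>x \<in> carrier G\<close> have "x = (x \<otimes> c 0) \<otimes> inv c 0"
      by (simp add: m_assoc)
    ultimately show "x \<in> {a \<otimes> inv a' | a a'. a \<in> A \<and> a' \<in> A}"
      using BC x \<open>C \<subseteq> A\<close> by blast
  qed
  ultimately show ?thesis
    by (intro exI[of _ B] exI[of _ C]) blast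
qed

theorem mainTheorem6:
  fixes G :: "('a, 'b) monoid_scheme" and A :: "'a set"
  assumes "group G"
    and "countable (carrier G)" and "infinite (carrier G)"
    and "amenable G"
    and "A \<subseteq> carrier G"
    and "stable_set G A"
    and "upper_banach_density G A > 0"
  shows "\<exists>B C. infinite B \<and> infinite C \<and>
           B \<subseteq> {a \<otimes>\<^bsub>G\<^esub> inv\<^bsub>G\<^esub> a' | a a'. a \<in> A \<and> a' \<in> A} \<and>
           C \<subseteq> A \<and>
           (\<forall>b\<in>B. \<forall>c\<in>C. b \<otimes>\<^bsub>G\<^esub> c \<in> A)"
proof -
  obtain F where F: "folner_seq G F" and pos: "0 < upper_density_along F A"
    using assms(7) unfolding upper_banach_density_def less_SUP_iff by auto
  interpret folner_sequence G F
    using assms(1) F by (simp add: folner_sequence_def folner_sequence_axioms_def)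
  obtain b c :: "nat \<Rightarrow> 'a" where b: "inj b" "range b \<subseteq> carrier G" and c: "inj c" "range c \<subseteq> A"
    and half: "\<forall>j i. j < i \<longrightarrow> b j \<otimes>\<^bsub>G\<^esub> c i \<in> A"
    using half_graph_sequences[OF assms(5) pos] by blast
  obtain h :: "nat \<Rightarrow> nat" where h: "strict_mono h"
    and off_diagonal: "\<forall>m n. m \<noteq> n \<longrightarrow> b (h m) \<otimes>\<^bsub>G\<^esub> c (h n) \<in> A"
    using stable_half_graph_extends[OF assms(5,6) b(2) c(2) half] by blast
  have "inj (\<lambda>n. b (h n))" "inj (\<lambda>n. c (h n))"
    using b(1) c(1) strict_mono_imp_inj_on[OF h] by (simp_all add: inj_compose[unfolded comp_def])
  with b(2) c(2) off_diagonal show ?thesis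
    by (intro infinite_sets_from_off_diagonal[OF assms(5)]) auto
qed

end
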